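(* Let $B\in\mathbb{R}^{p\times H}$ be the incidence matrix described in the context. Then $\mathcal D=\{\mathrm{diag}(\exp(Bu)) : u\in\mathbb{R}^H\}$ (exponential taken entrywise). Consequently, the problem $\min_{D'=\mathrm{diag}(d')\in\mathcal D}\ p\log\big(\sum_{i=1}^pd'_iG_{ii}\big)-\sum_{i=1}^p\log d'_i$ is equivalent to $$\min_{u\in\mathbb{R}^H}F(u),\qquad F(u):=p\log\Big(\sum_{i=1}^pe^{(Bu)_i}G_{ii}\Big)-\sum_{i=1}^p(Bu)_i,$$ in the sense that if $u$ solves the latter then $D':=\mathrm{diag}(\exp(Bu))$ solves the former.
   Context: $\mathcal G=(V,E)$ is a finite DAG; input neurons have no incoming edges, output neurons no outgoing edges, hidden neurons $\mathcal H$ ($H=|\mathcal H|$) are the rest. $\theta\in\mathbb{R}^p$ consists of one weight per edge and one bias $b_v$ per non-input neuron $v$. For $h\in\mathcal H$, $\mathrm{in}_h$ = indices of $b_h$ and of incoming edge weights of $h$, $\mathrm{out}_h$ = indices of outgoing edge weights of $h$. $B$ has columns indexed by $h\in\mathcal H$: $B_{ih}=-1$ if $i\in\mathrm{in}_h$, $B_{ih}=1$ if $i\in\mathrm{out}_h$, $0$ otherwise. For $\lambda>0$, $D_{\lambda,h}$ is the diagonal $p\times p$ matrix with entries $\lambda$ on $\mathrm{in}_h$, $1/\lambda$ on $\mathrm{out}_h$, $1$ elsewhere; $\mathcal D$ is the group generated by all $D_{\lambda,h}$. $G=G_\theta=\partial\Phi(\theta)^\top\partial\Phi(\theta)$, where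 $\Phi:\mathbb{R}^p\to\mathbb{R}^q$ is the path-lifting: for each path $v_0\to\cdots\to v_d$ along edges ending at an output neuron (for $d=0$, $v_0$ non-input), the coordinate is the product of the weights along the path, multiplied by $b_{v_0}$ if $v_0$ is not an input neuron. *)

theory Defs
  imports "HOL-Analysis.Analysis"
begin

text \<open>Parameters of the network: one weight per edge, one bias per non-input neuron.
  A parameter vector \<open>\<theta> \<in> \<real>^p\<close> is a function on the index set \<open>params V E\<close>.
  Diagonal p x p matrices are represented by their diagonal (a function on the indices).\<close>

datatype 'v param = Edge 'v 'v | Bias 'v

definition is_input :: "('v \<times> 'v) set \<Rightarrow> 'v \<Rightarrow> bool" where
  "is_input E v \<longleftrightarrow> (\<forall>u. (u, v) \<notin> E)"

definition is_output :: "('v \<times> 'v) set \<Rightarrow> 'v \<Rightarrow> bool" where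
  "is_output E v \<longleftrightarrow> (\<forall>w. (v, w) \<notin> E)"

definition hidden :: "'v set \<Rightarrow> ('v \<times> 'v) set \<Rightarrow> 'v set" where
  "hidden V E = {v \<in> V. \<not> is_input E v \<and> \<not> is_output E v}"

definition params :: "'v set \<Rightarrow> ('v \<times> 'v) set \<Rightarrow> 'v param set" where
  "params V E = {Edge a b | a b. (a, b) \<in> E} \<union> {Bias v | v. v \<in> V \<and> \<not> is_input E v}"

definition in_idx :: "('v \<times> 'v) set \<Rightarrow> 'v \<Rightarrow> 'v param set" where
  "in_idx E h = {Bias h} \<union> {Edge u h | u. (u, h) \<in> E}"

definition out_idx :: "('v \<times> 'v) set \<Rightarrow> 'v \<Rightarrow> 'v param set" where
  "out_idx E h = {Edge h w | w. (h, w) \<in> E}"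

definition incB :: "('v \<times> 'v) set \<Rightarrow> 'v param \<Rightarrow> 'v \<Rightarrow> real" where
  "incB E i h = (if i \<in> in_idx E h then -1 else if i \<in> out_idx E h then 1 else 0)"

definition Bmul :: "'v set \<Rightarrow> ('v \<times> 'v) set \<Rightarrow> ('v \<Rightarrow> real) \<Rightarrow> 'v param \<Rightarrow> real" where
  "Bmul V E u i = (\<Sum>h\<in>hidden V E. incB E i h * u h)"

definition rescale :: "('v \<times> 'v) set \<Rightarrow> real \<Rightarrow> 'v \<Rightarrow> 'v param \<Rightarrow> real" where
  "rescale E lam h = (\<lambda>i. if i \<in> in_idx E h then lam
                          else if i \<in> out_idx E h then 1 / lam else 1)"

inductive_set rescaling_group :: "'v set \<Rightarrow> ('v \<times> 'v) set \<Rightarrow> ('v param \<Rightarrow> real) set"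
  for V :: "'v set" and E :: "('v \<times> 'v) set" where
  one: "(\<lambda>_. 1) \<in> rescaling_group V E"
| gen: "lam > 0 \<Longrightarrow> h \<in> hidden V E \<Longrightarrow> rescale E lam h \<in> rescaling_group V E"
| mult: "d \<in> rescaling_group V E \<Longrightarrow> d' \<in> rescaling_group V E \<Longrightarrow>
         (\<lambda>i. d i * d' i) \<in> rescaling_group V E"
| inv: "d \<in> rescaling_group V E \<Longrightarrow> (\<lambda>i. inverse (d i)) \<in> rescaling_group V E"

definition paths :: "'v set \<Rightarrow> ('v \<times> 'v) set \<Rightarrow> 'v list set" where
  "paths V E = {xs. xs \<noteq> [] \<and> set xs \<subseteq> V \<and> successively (\<lambda>a b. (a, b) \<in> E) xs
                   \<and> is_output E (last xs) \<and> (length xs = 1 \<longrightarrow> \<not> is_input E (hd xs))}"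

definition path_coord :: "('v \<times> 'v) set \<Rightarrow> ('v param \<Rightarrow> real) \<Rightarrow> 'v list \<Rightarrow> real" where
  "path_coord E \<theta> xs =
     (if is_input E (hd xs) then 1 else \<theta> (Bias (hd xs))) *
     prod_list (map (\<lambda>(a, b). \<theta> (Edge a b)) (zip xs (tl xs)))"

definition jac :: "('v \<times> 'v) set \<Rightarrow> ('v param \<Rightarrow> real) \<Rightarrow> 'v list \<Rightarrow> 'v param \<Rightarrow> real" where
  "jac E \<theta> xs i = deriv (\<lambda>t. path_coord E (\<theta>(i := t)) xs) (\<theta> i)"

definition gram :: "'v set \<Rightarrow> ('v \<times> 'v) set \<Rightarrow> ('v param \<Rightarrow> real) \<Rightarrow> 'v param \<Rightarrow> 'v param \<Rightarrow> real" where
  "gram V E \<theta> i j = (\<Sum>xs\<in>paths V E. jac E \<theta> xs i * jac E \<theta> xs j)"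

definition rescale_obj :: "'v set \<Rightarrow> ('v \<times> 'v) set \<Rightarrow> ('v param \<Rightarrow> real) \<Rightarrow> ('v param \<Rightarrow> real) \<Rightarrow> real" where
  "rescale_obj V E \<theta> d =
     real (card (params V E)) * ln (\<Sum>i\<in>params V E. d i * gram V E \<theta> i i)
     - (\<Sum>i\<in>params V E. ln (d i))"

definition F_obj :: "'v set \<Rightarrow> ('v \<times> 'v) set \<Rightarrow> ('v param \<Rightarrow> real) \<Rightarrow> ('v \<Rightarrow> real) \<Rightarrow> real" where
  "F_obj V E \<theta> u =
     real (card (params V E)) * ln (\<Sum>i\<in>params V E. exp (Bmul V E u i) * gram V E \<theta> i i)
     - (\<Sum>i\<in>params V E. Bmul V E u i)"

end

theory Submission
  imports Defs
begin

text \<open>The entrywise logarithm of the generator \<open>D_{\<lambda>,h}\<close> is \<open>-(ln \<lambda>)\<close> times column \<open>h\<close>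
  of \<open>B\<close>. Hence \<open>u \<mapsto> diag(exp(Bu))\<close> is a group homomorphism from \<open>(\<real>^H, +)\<close> into \<open>\<D>\<close> whose
  image contains every generator, so the image is all of \<open>\<D>\<close>. As \<open>ln (exp (Bu)) = Bu\<close>, the
  objective \<open>F\<close> is the rescaling objective composed with this surjection, and minimizers transfer.\<close>

lemma finite_hidden: "finite V \<Longrightarrow> finite (hidden V E)"
  unfolding hidden_def by simp

lemma Bmul_zero: "Bmul V E (\<lambda>_. 0) i = 0"
  by (simp add: Bmul_def)

lemma Bmul_add: "Bmul V E (\<lambda>h. u h + u' h) i = Bmul V E u i + Bmul V E u' i"
  by (simp add: Bmul_def distrib_left sum.distrib)

lemma Bmul_uminus: "Bmul V E (\<lambda>h. - u h) i = - Bmul V E u i"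
  by (simp add: Bmul_def sum_negf)

lemma Bmul_unit_vector:
  assumes "finite V" and "h \<in> hidden V E"
  shows "Bmul V E (\<lambda>h'. if h' = h then c else 0) i = incB E i h * c"
  unfolding Bmul_def using assms finite_hidden[OF assms(1)]
  by (simp add: if_distrib sum.delta cong: if_cong)

lemma rescale_eq_exp_incB: "lam > 0 \<Longrightarrow> rescale E lam h i = exp (incB E i h * - ln lam)"
  by (auto simp: rescale_def incB_def exp_minus exp_ln divide_inverse)

lemma rescaling_group_exp_Bmul:
  assumes "finite V" and "d \<in> rescaling_group V E"
  shows "\<exists>u. d = (\<lambda>i. exp (Bmul V E u i))"
  using assms(2)
proof induction
  case one
  show ?case
    by (rule exI[of _ "\<lambda>_. 0"]) (simp add: Bmul_zero)
next
  case (gen lam h)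
  then show ?case
    by (intro exI[of _ "\<lambda>h'. if h' = h then - ln lam else 0"])
       (simp add: Bmul_unit_vector[OF assms(1)] rescale_eq_exp_incB)
next
  case (mult d d')
  then obtain u u' where "d = (\<lambda>i. exp (Bmul V E u i))" "d' = (\<lambda>i. exp (Bmul V E u' i))"
    by blast
  then show ?case
    by (intro exI[of _ "\<lambda>h. u h + u' h"]) (simp add: Bmul_add exp_add)
next
  case (inv d)
  then obtain u where "d = (\<lambda>i. exp (Bmul V E u i))"
    by blast
  then show ?case
    by (intro exI[of _ "\<lambda>h. - u h"]) (simp add: Bmul_uminus exp_minus)
qed

lemma exp_incB_sum_in_rescaling_group:
  assumes "finite S" and "S \<subseteq> hidden V E"
  shows "(\<lambda>i. exp (\<Sum>h\<in>S. incB E i h * u h)) \<in> rescaling_group V E"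
  using assms
proof (induction S rule: finite_induct)
  case empty
  then show ?case
    using rescaling_group.one by simp
next
  case (insert h S)
  have "rescale E (exp (- u h)) h \<in> rescaling_group V E"
    using insert by (intro rescaling_group.gen) auto
  with insert have "(\<lambda>i. rescale E (exp (- u h)) h i * exp (\<Sum>h\<in>S. incB E i h * u h))
      \<in> rescaling_group V E"
    by (intro rescaling_group.mult) auto
  with insert show ?case
    by (simp add: rescale_eq_exp_incB exp_add)
qed

lemma exp_Bmul_in_rescaling_group:
  "finite V \<Longrightarrow> (\<lambda>i. exp (Bmul V E u i)) \<in> rescaling_group V E"
  unfolding Bmul_def by (rule exp_incB_sum_in_rescaling_group[OF finite_hidden]) simp_all

lemma rescaling_group_eq_range_exp_Bmul:
  "finite V \<Longrightarrow> rescaling_group V E = {(\<lambda>i. exp (Bmul V E u i)) | u. True}"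
  using rescaling_group_exp_Bmul exp_Bmul_in_rescaling_group by blast

lemma F_obj_eq_rescale_obj_exp_Bmul:
  "F_obj V E \<theta> u = rescale_obj V E \<theta> (\<lambda>i. exp (Bmul V E u i))"
  unfolding F_obj_def rescale_obj_def by simp

theorem lemmaF3:
  fixes V :: "'v set" and E :: "('v \<times> 'v) set" and \<theta> :: "'v param \<Rightarrow> real"
  assumes "finite V" and "E \<subseteq> V \<times> V" and "acyclic E"
  shows "rescaling_group V E = {(\<lambda>i. exp (Bmul V E u i)) | u. True}
     \<and> (\<forall>u. (\<forall>u'. F_obj V E \<theta> u \<le> F_obj V E \<theta> u') \<longrightarrow>
            (\<lambda>i. exp (Bmul V E u i)) \<in> rescaling_group V E \<and>
            (\<forall>d' \<in> rescaling_group V E.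
               rescale_obj V E \<theta> (\<lambda>i. exp (Bmul V E u i)) \<le> rescale_obj V E \<theta> d'))"
proof -
  note group_eq = rescaling_group_eq_range_exp_Bmul[OF assms(1)]
  have "rescale_obj V E \<theta> (\<lambda>i. exp (Bmul V E u i)) \<le> rescale_obj V E \<theta> d'"
    if "\<forall>u'. F_obj V E \<theta> u \<le> F_obj V E \<theta> u'" and "d' \<in> rescaling_group V E" for u d'
  proof -
    from \<open>d' \<in> rescaling_group V E\<close> obtain u' where "d' = (\<lambda>i. exp (Bmul V E u' i))"
      using group_eq by blast
    with that(1) show ?thesis
      by (metis F_obj_eq_rescale_obj_exp_Bmul)
  qed
  with group_eq exp_Bmul_in_rescaling_group[OF assms(1)] show ?thesis
    by blast
qed

end
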